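(* Let $b_1>b_2>0$, $m\in\mathbb R$ and $d\ge1$. Let $Y_1\sim b_1\chi^2_d$ and $Y_2\sim b_2\chi^2_d$ (not necessarily independent). Then $$\mathbb P(Y_1-Y_2\le m)\le \exp\!\Bigl(m\,\frac{b_1-b_2}{8b_1b_2}\Bigr)\rho^{d/4},\qquad \rho=1-\Bigl(\frac{b_1-b_2}{b_1+b_2}\Bigr)^2<1.$$
   Context: For $b>0$, "$Y\sim b\chi^2_d$" means $Y/b$ has the chi-squared distribution with $d$ degrees of freedom. *)

theory Defs
  imports "HOL-Probability.Probability"
begin

definition chi2_density :: "nat \<Rightarrow> real \<Rightarrow> real" where
  "chi2_density d x =
     (if 0 < x then x powr (real d / 2 - 1) * exp (- x / 2)
                    / (2 powr (real d / 2) * Gamma (real d / 2))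
      else 0)"

definition scaled_chi2 :: "'a measure \<Rightarrow> real \<Rightarrow> nat \<Rightarrow> ('a \<Rightarrow> real) \<Rightarrow> bool" where
  "scaled_chi2 M b d Y \<longleftrightarrow>
     distributed M lborel (\<lambda>\<omega>. Y \<omega> / b) (\<lambda>x. ennreal (chi2_density d x))"

end

theory Submission
  imports Defs
begin

text \<open>Chernoff bound for the difference, with the exponential moment of the product split
  by Cauchy--Schwarz so that no independence of Y1 and Y2 is needed:
  P(Y1 - Y2 <= m) <= e^(tm) E[e^(-t Y1) e^(t Y2)] <= e^(tm) (E[e^(-2t Y1)] E[e^(2t Y2)])^(1/2).
  The moment generating function of b chi^2_d is (1 - 2sb)^(-d/2), and for the choice
  t = (b1 - b2) / (8 b1 b2) the product (1 + 4t b1)(1 - 4t b2) is exactly 1/rho.\<close>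

lemma nn_integral_powr_exp_Gamma:
  fixes a k :: real
  assumes a: "a > 0" and k: "k > 0"
  shows "(\<integral>\<^sup>+x. ennreal (indicator {0..} x * x powr (a - 1) * exp (- k * x)) \<partial>lborel)
           = ennreal (Gamma a / k powr a)" (is "?I = _")
proof -
  define f where "f t = ennreal (indicator {0..} t * t powr (a - 1) / exp t)" for t :: real
  have [measurable]: "f \<in> borel_measurable borel" unfolding f_def by measurable
  have scaled: "f (0 + k * x) = ennreal (k powr (a - 1))
                  * ennreal (indicator {0..} x * x powr (a - 1) * exp (- k * x))" for x
    using k by (cases "x \<ge> 0")
      (auto simp: f_def powr_mult exp_minus divide_inverse indicator_def not_le mult_pos_neg
            simp flip: ennreal_mult)
  have "ennreal (Gamma a) = (\<integral>\<^sup>+t. f t \<partial>lborel)"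
    using Gamma_conv_nn_integral_real[OF a] by (simp add: f_def)
  also have "\<dots> = ennreal k * (\<integral>\<^sup>+x. f (0 + k * x) \<partial>lborel)"
    using nn_integral_real_affine[of f k 0] k by simp
  also have "\<dots> = ennreal k * (ennreal (k powr (a - 1)) * ?I)"
    unfolding scaled by (subst nn_integral_cmult) auto
  also have "\<dots> = ennreal (k powr a) * ?I"
    using k by (simp add: mult.assoc[symmetric] powr_diff flip: ennreal_mult)
  finally have "ennreal (k powr (- a)) * ennreal (Gamma a) = ennreal (k powr (- a) * k powr a) * ?I"
    using k by (simp add: mult.assoc ennreal_mult)
  then show ?thesis
    using k a by (simp add: powr_minus divide_inverse mult.commute ennreal_mult)
qed

lemma nn_integral_chi2_density_exp:
  fixes s :: real
  assumes s: "s < 1/2" and d: "d \<ge> 1"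
  shows "(\<integral>\<^sup>+x. ennreal (chi2_density d x) * ennreal (exp (s * x)) \<partial>lborel)
           = ennreal ((1 - 2 * s) powr (- (real d / 2)))"
proof -
  define a where "a = real d / 2"
  define k where "k = 1/2 - s"
  define c where "c = 1 / (2 powr a * Gamma a)"
  have a: "a > 0" using d by (simp add: a_def)
  have k: "k > 0" using s by (simp add: k_def)
  have c: "c \<ge> 0" using a by (simp add: c_def)
  have density: "ennreal (chi2_density d x) * ennreal (exp (s * x))
      = ennreal c * ennreal (indicator {0..} x * x powr (a - 1) * exp (- k * x))" for x
  proof -
    have "chi2_density d x * exp (s * x) = c * (indicator {0..} x * x powr (a - 1) * exp (- k * x))"
      by (cases "x > 0") (auto simp: chi2_density_def a_def c_def k_def indicator_def
            mult_exp_exp field_simps)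
    moreover have "chi2_density d x \<ge> 0" using a by (simp add: chi2_density_def a_def)
    ultimately show ?thesis using c by (simp flip: ennreal_mult)
  qed
  have "(\<integral>\<^sup>+x. ennreal (chi2_density d x) * ennreal (exp (s * x)) \<partial>lborel)
      = ennreal c * ennreal (Gamma a / k powr a)"
    unfolding density using nn_integral_powr_exp_Gamma[OF a k]
    by (subst nn_integral_cmult) auto
  also have "\<dots> = ennreal ((2 * k) powr (- a))"
  proof -
    have "Gamma a \<noteq> 0" using Gamma_real_pos[OF a] by linarith
    then have "c * (Gamma a / k powr a) = (2 * k) powr (- a)"
      using k by (simp add: c_def powr_minus powr_mult field_simps)
    then show ?thesis using c by (metis ennreal_mult')
  qed
  finally show ?thesis by (simp add: a_def k_def)
qed

lemma scaled_chi2_measurable: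
  assumes "scaled_chi2 M b d Y" and "b \<noteq> 0"
  shows "Y \<in> borel_measurable M"
proof -
  have "(\<lambda>\<omega>. Y \<omega> / b) \<in> borel_measurable M"
    using distributed_measurable assms(1) unfolding scaled_chi2_def by fastforce
  then have "(\<lambda>\<omega>. b * (Y \<omega> / b)) \<in> borel_measurable M"
    by measurable
  then show ?thesis using assms(2) by simp
qed

lemma nn_integral_exp_scaled_chi2:
  assumes Y: "scaled_chi2 M b d Y" and b: "b \<noteq> 0" and s: "s * b < 1/2" and d: "d \<ge> 1"
  shows "(\<integral>\<^sup>+\<omega>. ennreal (exp (s * Y \<omega>)) \<partial>M) = ennreal ((1 - 2 * s * b) powr (- (real d / 2)))"
proof -
  have "(\<integral>\<^sup>+\<omega>. ennreal (exp (s * Y \<omega>)) \<partial>M) = (\<integral>\<^sup>+\<omega>. ennreal (exp ((s * b) * (Y \<omega> / b))) \<partial>M)"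
    using b by simp
  also have "\<dots> = (\<integral>\<^sup>+x. ennreal (chi2_density d x) * ennreal (exp ((s * b) * x)) \<partial>lborel)"
    using Y unfolding scaled_chi2_def by (subst distributed_nn_integral) auto
  also have "\<dots> = ennreal ((1 - 2 * s * b) powr (- (real d / 2)))"
    using nn_integral_chi2_density_exp[OF s d] by (simp add: mult.assoc)
  finally show ?thesis .
qed

lemma nn_integral_mult_le_sqrt:
  fixes f g :: "'a \<Rightarrow> ennreal"
  assumes "f \<in> borel_measurable M" "g \<in> borel_measurable M"
    and "(\<integral>\<^sup>+x. f x ^ 2 \<partial>M) = ennreal A" "(\<integral>\<^sup>+x. g x ^ 2 \<partial>M) = ennreal B"
    and "0 \<le> A" "0 \<le> B"
  shows "(\<integral>\<^sup>+x. f x * g x \<partial>M) \<le> ennreal (sqrt (A * B))"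
proof -
  have square: "(\<integral>\<^sup>+x. f x * g x \<partial>M) ^ 2 \<le> ennreal (A * B)"
    using Cauchy_Schwarz_nn_integral[OF assms(1,2)] assms(3-6) by (simp add: ennreal_mult)
  then obtain r where r: "(\<integral>\<^sup>+x. f x * g x \<partial>M) = ennreal r" "0 \<le> r"
    by (cases "\<integral>\<^sup>+x. f x * g x \<partial>M") (auto simp: top_unique)
  then have "r ^ 2 \<le> A * B"
    using square assms(5,6) by (simp add: ennreal_power)
  then show ?thesis
    using r by (simp add: ennreal_leI real_le_rsqrt)
qed

lemma emeasure_diff_le_exp_sqrt_mgf:
  fixes X Y :: "'a \<Rightarrow> real"
  assumes [measurable]: "X \<in> borel_measurable M" "Y \<in> borel_measurable M"
    and t: "t > 0"
    and A: "(\<integral>\<^sup>+\<omega>. ennreal (exp (- 2 * t * X \<omega>)) \<partial>M) = ennreal A" "0 \<le> A"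
    and B: "(\<integral>\<^sup>+\<omega>. ennreal (exp (2 * t * Y \<omega>)) \<partial>M) = ennreal B" "0 \<le> B"
  shows "emeasure M {\<omega> \<in> space M. X \<omega> - Y \<omega> \<le> m} \<le> ennreal (exp (t * m) * sqrt (A * B))"
proof -
  have "emeasure M {\<omega> \<in> space M. X \<omega> - Y \<omega> \<le> m}
      \<le> ennreal (exp (t * m)) * (\<integral>\<^sup>+\<omega>. ennreal (exp (- t * (X \<omega> - Y \<omega>))) * indicator (space M) \<omega> \<partial>M)"
    using t by (intro Chernoff_ineq_nn_integral_le) auto
  also have "(\<integral>\<^sup>+\<omega>. ennreal (exp (- t * (X \<omega> - Y \<omega>))) * indicator (space M) \<omega> \<partial>M)
      = (\<integral>\<^sup>+\<omega>. ennreal (exp (- t * X \<omega>)) * ennreal (exp (t * Y \<omega>)) \<partial>M)"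
    by (intro nn_integral_cong) (simp add: algebra_simps mult_exp_exp flip: ennreal_mult)
  also have "\<dots> \<le> ennreal (sqrt (A * B))"
  proof (rule nn_integral_mult_le_sqrt)
    show "(\<integral>\<^sup>+\<omega>. ennreal (exp (- t * X \<omega>)) ^ 2 \<partial>M) = ennreal A"
      using A(1) by (simp add: ennreal_power algebra_simps flip: exp_of_nat_mult)
    show "(\<integral>\<^sup>+\<omega>. ennreal (exp (t * Y \<omega>)) ^ 2 \<partial>M) = ennreal B"
      using B(1) by (simp add: ennreal_power algebra_simps flip: exp_of_nat_mult)
  qed (use A B in auto)
  finally show ?thesis
    by (simp add: ennreal_mult' mult_left_mono)
qed

lemma sqrt_powr_chi2_Chernoff_factors:
  fixes b1 b2 p :: real
  assumes b1: "b1 > 0" and b2: "b2 > 0"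
  defines "t \<equiv> (b1 - b2) / (8 * b1 * b2)"
  shows "sqrt ((1 + 4 * t * b1) powr (- p) * (1 - 4 * t * b2) powr (- p))
           = (1 - ((b1 - b2) / (b1 + b2))^2) powr (p / 2)"
proof -
  define x where "x = (b1 + b2) / (2 * b2)"
  define y where "y = (b1 + b2) / (2 * b1)"
  have x: "x > 0" and y: "y > 0"
    using b1 b2 by (simp_all add: x_def y_def)
  have "1 + 4 * t * b1 = x" and "1 - 4 * t * b2 = y"
    using b1 b2 by (simp_all add: t_def x_def y_def field_simps)
  then have "sqrt ((1 + 4 * t * b1) powr (- p) * (1 - 4 * t * b2) powr (- p))
      = ((x * y) powr (- p)) powr (1/2)"
    using x y by (simp add: powr_mult powr_half_sqrt real_sqrt_mult)
  also have "\<dots> = (inverse (x * y)) powr (p / 2)"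
    using x y by (simp add: powr_powr powr_minus inverse_powr del: inverse_mult_distrib)
  also have "inverse (x * y) = 1 - ((b1 - b2) / (b1 + b2))^2"
    using b1 b2 by (simp add: x_def y_def divide_simps) (simp add: power2_eq_square algebra_simps)
  finally show ?thesis .
qed

theorem lemma3p3:
  fixes M :: "'a measure" and b1 b2 m :: real and d :: nat
    and Y1 Y2 :: "'a \<Rightarrow> real"
  assumes "prob_space M"
    and "b1 > b2" and "b2 > 0" and "d \<ge> 1"
    and "scaled_chi2 M b1 d Y1" and "scaled_chi2 M b2 d Y2"
  shows "measure M {\<omega> \<in> space M. Y1 \<omega> - Y2 \<omega> \<le> m}
           \<le> exp (m * (b1 - b2) / (8 * b1 * b2))
             * (1 - ((b1 - b2) / (b1 + b2))^2) powr (real d / 4)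
         \<and> 1 - ((b1 - b2) / (b1 + b2))^2 < 1"
proof -
  interpret prob_space M by fact
  define t where "t = (b1 - b2) / (8 * b1 * b2)"
  have b1: "b1 > 0" and b2: "b2 > 0" and t: "t > 0"
    using assms(2,3) by (simp_all add: t_def)
  have [measurable]: "Y1 \<in> borel_measurable M" "Y2 \<in> borel_measurable M"
    using assms(5,6) b1 b2 by (simp_all add: scaled_chi2_measurable)
  have "- 2 * t * b1 < 1/2"
    using mult_pos_pos[OF t b1] by linarith
  moreover have "2 * t * b2 < 1/2"
    using assms(2) b1 b2 by (simp add: t_def field_simps add_pos_pos)
  ultimately
  have "(\<integral>\<^sup>+\<omega>. ennreal (exp (- 2 * t * Y1 \<omega>)) \<partial>M) = ennreal ((1 + 4 * t * b1) powr (- (real d / 2)))"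
    and "(\<integral>\<^sup>+\<omega>. ennreal (exp (2 * t * Y2 \<omega>)) \<partial>M) = ennreal ((1 - 4 * t * b2) powr (- (real d / 2)))"
    using nn_integral_exp_scaled_chi2[OF assms(5), of "- 2 * t"]
      nn_integral_exp_scaled_chi2[OF assms(6), of "2 * t"] b1 b2 assms(4)
    by simp_all
  then have "emeasure M {\<omega> \<in> space M. Y1 \<omega> - Y2 \<omega> \<le> m}
      \<le> ennreal (exp (t * m) * sqrt ((1 + 4 * t * b1) powr (- (real d / 2)) * (1 - 4 * t * b2) powr (- (real d / 2))))"
    using t by (intro emeasure_diff_le_exp_sqrt_mgf) auto
  also have "sqrt ((1 + 4 * t * b1) powr (- (real d / 2)) * (1 - 4 * t * b2) powr (- (real d / 2)))
      = (1 - ((b1 - b2) / (b1 + b2))^2) powr (real d / 4)"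
    using sqrt_powr_chi2_Chernoff_factors[OF b1 b2, of "real d / 2"] by (simp add: t_def)
  finally have "measure M {\<omega> \<in> space M. Y1 \<omega> - Y2 \<omega> \<le> m}
      \<le> exp (m * (b1 - b2) / (8 * b1 * b2)) * (1 - ((b1 - b2) / (b1 + b2))^2) powr (real d / 4)"
    by (simp add: emeasure_eq_measure t_def mult.commute)
  moreover have "(b1 - b2) / (b1 + b2) \<noteq> 0"
    using assms(2,3) by simp
  ultimately show ?thesis by simp
qed

end
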